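(* Let $i\in[n]$ and $M_i=\{\beta\in\Phi^+\mid\beta\ge\alpha_i\}$. If $M_i$ is an abelian ideal, then it is a maximal abelian ideal (with respect to inclusion).
   Context: $\Phi$ is a finite irreducible crystallographic root system with basis $\Pi=\{\alpha_1,\dots,\alpha_n\}$ and positive roots $\Phi^+$. The root poset is $\Phi^+$ with $\beta\ge\gamma$ iff $\beta-\gamma$ is a nonnegative integer combination of simple roots. An abelian ideal is a subset $I\subseteq\Phi^+$ closed upward in the root poset with $(I+I)\cap\Phi=\emptyset$. *)

theory Defs
  imports "HOL-Analysis.Analysis"
begin

definition root_system :: "'a::euclidean_space set \<Rightarrow> bool" where
  "root_system \<Phi> \<longleftrightarrow>
     finite \<Phi> \<and> 0 \<notin> \<Phi> \<and> span \<Phi> = UNIV \<and>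
     (\<forall>\<alpha>\<in>\<Phi>. \<forall>\<beta>\<in>\<Phi>. \<beta> - (2 * (\<beta> \<bullet> \<alpha>) / (\<alpha> \<bullet> \<alpha>)) *\<^sub>R \<alpha> \<in> \<Phi>) \<and>
     (\<forall>\<alpha>\<in>\<Phi>. \<forall>\<beta>\<in>\<Phi>. 2 * (\<beta> \<bullet> \<alpha>) / (\<alpha> \<bullet> \<alpha>) \<in> \<int>) \<and>
     (\<forall>\<alpha>\<in>\<Phi>. \<forall>c::real. c *\<^sub>R \<alpha> \<in> \<Phi> \<longrightarrow> c = 1 \<or> c = -1)"

definition irreducible_rs :: "'a::euclidean_space set \<Rightarrow> bool" where
  "irreducible_rs \<Phi> \<longleftrightarrow>
     \<not> (\<exists>A B. A \<union> B = \<Phi> \<and> A \<inter> B = {} \<and> A \<noteq> {} \<and> B \<noteq> {} \<and>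
            (\<forall>a\<in>A. \<forall>b\<in>B. a \<bullet> b = 0))"

definition simple_basis :: "'a::euclidean_space set \<Rightarrow> 'a set \<Rightarrow> bool" where
  "simple_basis \<Phi> \<Delta> \<longleftrightarrow>
     \<Delta> \<subseteq> \<Phi> \<and> independent \<Delta> \<and>
     (\<forall>\<beta>\<in>\<Phi>. \<exists>c::'a \<Rightarrow> int. \<beta> = (\<Sum>\<alpha>\<in>\<Delta>. of_int (c \<alpha>) *\<^sub>R \<alpha>) \<and>
                 ((\<forall>\<alpha>\<in>\<Delta>. c \<alpha> \<ge> 0) \<or> (\<forall>\<alpha>\<in>\<Delta>. c \<alpha> \<le> 0)))"

definition nonneg_comb :: "'a::euclidean_space set \<Rightarrow> 'a \<Rightarrow> bool" where
  "nonneg_comb \<Delta> v \<longleftrightarrow> (\<exists>c::'a \<Rightarrow> nat. v = (\<Sum>\<alpha>\<in>\<Delta>. of_nat (c \<alpha>) *\<^sub>R \<alpha>))"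

definition pos_roots :: "'a::euclidean_space set \<Rightarrow> 'a set \<Rightarrow> 'a set" where
  "pos_roots \<Phi> \<Delta> = {\<beta>\<in>\<Phi>. nonneg_comb \<Delta> \<beta>}"

text \<open>Root poset order: \<open>root_le \<Delta> \<gamma> \<beta>\<close> means \<open>\<gamma> \<le> \<beta>\<close>.\<close>
definition root_le :: "'a::euclidean_space set \<Rightarrow> 'a \<Rightarrow> 'a \<Rightarrow> bool" where
  "root_le \<Delta> \<gamma> \<beta> \<longleftrightarrow> nonneg_comb \<Delta> (\<beta> - \<gamma>)"

definition abelian_ideal :: "'a::euclidean_space set \<Rightarrow> 'a set \<Rightarrow> 'a set \<Rightarrow> bool" where
  "abelian_ideal \<Phi> \<Delta> I \<longleftrightarrow>
     I \<subseteq> pos_roots \<Phi> \<Delta> \<and>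
     (\<forall>\<beta>\<in>I. \<forall>\<gamma>\<in>pos_roots \<Phi> \<Delta>. root_le \<Delta> \<beta> \<gamma> \<longrightarrow> \<gamma> \<in> I) \<and>
     (\<forall>\<beta>\<in>I. \<forall>\<gamma>\<in>I. \<beta> + \<gamma> \<notin> \<Phi>)"

definition maximal_abelian_ideal :: "'a::euclidean_space set \<Rightarrow> 'a set \<Rightarrow> 'a set \<Rightarrow> bool" where
  "maximal_abelian_ideal \<Phi> \<Delta> I \<longleftrightarrow>
     abelian_ideal \<Phi> \<Delta> I \<and> (\<forall>J. abelian_ideal \<Phi> \<Delta> J \<and> I \<subseteq> J \<longrightarrow> J = I)"

end

theory Submission
  imports Defs
begin

text \<open>
  Let \<open>J\<close> be an abelian ideal containing \<open>M = {\<beta> \<in> \<Phi>\<^sup>+. \<beta> \<ge> \<alpha>}\<close>; then \<open>\<alpha> \<in> J\<close>. A root of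
  \<open>J\<close> outside \<open>M\<close> has \<open>\<alpha>\<close>-coordinate \<open>0\<close>, so if there is one we may pick such a root \<open>\<delta> \<in> J\<close>
  of maximal height. Then \<open>\<delta>\<close> is dominant: if \<open>\<delta> \<bullet> a < 0\<close> for a simple root \<open>a\<close>, then
  \<open>\<delta> + a\<close> is a root; for \<open>a = \<alpha>\<close> this contradicts commutativity of \<open>J\<close>, and otherwise
  \<open>\<delta> + a \<in> J\<close> is higher with \<open>\<alpha>\<close>-coordinate \<open>0\<close>. Since distinct simple roots have
  non-positive inner product, the support \<open>S\<close> of a dominant root is orthogonal to \<open>\<Delta> - S\<close>.
  But \<open>S\<close> is nonempty and misses \<open>\<alpha>\<close>, so the Dynkin diagram is disconnected, contradicting
  irreducibility: every root is supported either in \<open>S\<close> or in \<open>\<Delta> - S\<close>, which is shown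
  by induction on the height.
\<close>

locale based_root_system =
  fixes \<Phi> \<Delta> :: "'a::euclidean_space set"
  assumes root_system: "root_system \<Phi>" and simple_basis: "simple_basis \<Phi> \<Delta>"
begin

lemma finite_roots: "finite \<Phi>"
  using root_system by (simp add: root_system_def)

lemma zero_not_root: "0 \<notin> \<Phi>"
  using root_system by (simp add: root_system_def)

lemma reflection_in_roots:
  "\<alpha> \<in> \<Phi> \<Longrightarrow> \<beta> \<in> \<Phi> \<Longrightarrow> \<beta> - (2 * (\<beta> \<bullet> \<alpha>) / (\<alpha> \<bullet> \<alpha>)) *\<^sub>R \<alpha> \<in> \<Phi>"
  using root_system by (simp add: root_system_def)

lemma cartan_integer: "\<alpha> \<in> \<Phi> \<Longrightarrow> \<beta> \<in> \<Phi> \<Longrightarrow> 2 * (\<beta> \<bullet> \<alpha>) / (\<alpha> \<bullet> \<alpha>) \<in> \<int>"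
  using root_system by (simp add: root_system_def)

lemma root_multiple: "\<alpha> \<in> \<Phi> \<Longrightarrow> c *\<^sub>R \<alpha> \<in> \<Phi> \<Longrightarrow> c = 1 \<or> c = -1"
  using root_system by (simp add: root_system_def)

lemma simple_subset_roots: "\<Delta> \<subseteq> \<Phi>"
  using simple_basis by (simp add: simple_basis_def)

lemma finite_simple: "finite \<Delta>"
  using simple_subset_roots finite_roots finite_subset by blast

lemma independent_simple: "independent \<Delta>"
  using simple_basis by (simp add: simple_basis_def)

lemma root_inner_self_pos: "\<beta> \<in> \<Phi> \<Longrightarrow> 0 < \<beta> \<bullet> \<beta>"
  using zero_not_root by auto

lemma reflection_self: "\<alpha> \<in> \<Phi> \<Longrightarrow> \<beta> \<in> \<Phi> \<Longrightarrow> \<beta> \<bullet> \<alpha> = \<alpha> \<bullet> \<alpha> \<Longrightarrow> \<beta> - 2 *\<^sub>R \<alpha> \<in> \<Phi>"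
  using reflection_in_roots[of \<alpha> \<beta>] root_inner_self_pos[of \<alpha>] by simp

lemma uminus_root: "\<beta> \<in> \<Phi> \<Longrightarrow> - \<beta> \<in> \<Phi>"
  using reflection_self[of \<beta> \<beta>] by (simp add: scaleR_2)

lemma abs_inner_less_norm_mult:
  assumes \<beta>: "\<beta> \<in> \<Phi>" and \<gamma>: "\<gamma> \<in> \<Phi>" and "\<beta> \<noteq> \<gamma>" "\<beta> \<noteq> - \<gamma>"
  shows "\<bar>\<beta> \<bullet> \<gamma>\<bar> < norm \<beta> * norm \<gamma>"
proof -
  have "\<bar>\<beta> \<bullet> \<gamma>\<bar> \<noteq> norm \<beta> * norm \<gamma>"
  proof
    assume "\<bar>\<beta> \<bullet> \<gamma>\<bar> = norm \<beta> * norm \<gamma>"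
    then have "norm \<beta> *\<^sub>R \<gamma> = norm \<gamma> *\<^sub>R \<beta> \<or> norm \<beta> *\<^sub>R \<gamma> = (- norm \<gamma>) *\<^sub>R \<beta>"
      by (simp add: norm_cauchy_schwarz_abs_eq)
    moreover have "norm \<beta> \<noteq> 0"
      using \<beta> zero_not_root by auto
    ultimately obtain c where "\<gamma> = c *\<^sub>R \<beta>"
      by (metis eq_vector_fraction_iff)
    then have "c = 1 \<or> c = -1"
      using root_multiple \<beta> \<gamma> by blast
    then show False
      using \<open>\<gamma> = c *\<^sub>R \<beta>\<close> assms(3,4) by auto
  qed
  then show ?thesis
    using Cauchy_Schwarz_ineq2[of \<beta> \<gamma>] by linarith
qed

lemma root_add_if_inner_neg:
  assumes \<beta>: "\<beta> \<in> \<Phi>" and \<gamma>: "\<gamma> \<in> \<Phi>" and "\<beta> \<noteq> - \<gamma>" and neg: "\<beta> \<bullet> \<gamma> < 0"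
  shows "\<beta> + \<gamma> \<in> \<Phi>"
proof -
  have \<beta>\<beta>: "0 < \<beta> \<bullet> \<beta>" and \<gamma>\<gamma>: "0 < \<gamma> \<bullet> \<gamma>"
    using root_inner_self_pos \<beta> \<gamma> by auto
  obtain k l :: int where k: "2 * (\<beta> \<bullet> \<gamma>) / (\<gamma> \<bullet> \<gamma>) = k" and l: "2 * (\<gamma> \<bullet> \<beta>) / (\<beta> \<bullet> \<beta>) = l"
    using cartan_integer[OF \<gamma> \<beta>] cartan_integer[OF \<beta> \<gamma>] by (metis Ints_cases)
  have "real_of_int k < 0" "real_of_int l < 0"
    unfolding k[symmetric] l[symmetric] using neg \<beta>\<beta> \<gamma>\<gamma>
    by (simp_all add: divide_neg_pos inner_commute)
  then have "k < 0" "l < 0"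
    by simp_all
  \<comment> \<open>\<open>k l = 4 cos\<^sup>2 \<theta> < 4\<close>, so one of the negative integers \<open>k\<close>, \<open>l\<close> is \<open>-1\<close>.\<close>
  have "\<beta> \<noteq> \<gamma>"
    using neg \<gamma>\<gamma> by force
  then have "\<bar>\<beta> \<bullet> \<gamma>\<bar>\<^sup>2 < (norm \<beta> * norm \<gamma>)\<^sup>2"
    using abs_inner_less_norm_mult[OF \<beta> \<gamma> _ assms(3)] by (intro power_strict_mono) auto
  then have "4 * (\<beta> \<bullet> \<gamma>)\<^sup>2 / ((\<beta> \<bullet> \<beta>) * (\<gamma> \<bullet> \<gamma>)) < 4"
    using \<beta>\<beta> \<gamma>\<gamma> by (simp add: power_mult_distrib dot_square_norm divide_less_eq)
  also have "4 * (\<beta> \<bullet> \<gamma>)\<^sup>2 / ((\<beta> \<bullet> \<beta>) * (\<gamma> \<bullet> \<gamma>)) = k * l"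
    using k[symmetric] l[symmetric] by (simp add: inner_commute power2_eq_square)
  finally have "k * l < 4"
    by linarith
  have "k = -1 \<or> l = -1"
  proof (rule ccontr)
    assume "\<not> ?thesis"
    then have "2 \<le> -k" "2 \<le> -l"
      using \<open>k < 0\<close> \<open>l < 0\<close> by auto
    then have "2 * 2 \<le> (-k) * (-l)"
      by (intro mult_mono) auto
    with \<open>k * l < 4\<close> show False
      by simp
  qed
  then show ?thesis
    using reflection_in_roots[OF \<gamma> \<beta>] reflection_in_roots[OF \<beta> \<gamma>] k l by (auto simp: add.commute)
qed

definition coord :: "'a \<Rightarrow> 'a \<Rightarrow> real" where
  "coord v a = representation \<Delta> v a"

definition height :: "'a \<Rightarrow> real" where
  "height v = (\<Sum>a\<in>\<Delta>. coord v a)"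

definition support :: "'a \<Rightarrow> 'a set" where
  "support v = {a \<in> \<Delta>. coord v a \<noteq> 0}"

text \<open>\<open>S \<subseteq> \<Delta>\<close> is separated iff it is a union of connected components of the Dynkin diagram.\<close>

definition separated :: "'a set \<Rightarrow> bool" where
  "separated S \<longleftrightarrow> (\<forall>s\<in>S. \<forall>t\<in>\<Delta> - S. s \<bullet> t = 0)"

lemma root_in_span: "\<beta> \<in> \<Phi> \<Longrightarrow> \<beta> \<in> span \<Delta>"
proof -
  assume "\<beta> \<in> \<Phi>"
  then obtain c :: "'a \<Rightarrow> int" where "\<beta> = (\<Sum>\<alpha>\<in>\<Delta>. of_int (c \<alpha>) *\<^sub>R \<alpha>)"
    using simple_basis unfolding simple_basis_def by blast
  then show ?thesis
    by (simp add: span_sum span_scale span_base)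
qed

lemma coord_sum_scaleR: "coord (\<Sum>a\<in>\<Delta>. c a *\<^sub>R a) b = (if b \<in> \<Delta> then c b else 0)"
proof -
  have "coord (\<Sum>a\<in>\<Delta>. c a *\<^sub>R a) b = (\<Sum>a\<in>\<Delta>. representation \<Delta> (c a *\<^sub>R a) b)"
    unfolding coord_def
    by (subst representation_sum[OF independent_simple]) (auto simp: span_scale span_base)
  also have "\<dots> = (\<Sum>a\<in>\<Delta>. c a * (if b = a then 1 else 0))"
    by (rule sum.cong)
      (auto simp: representation_scale[OF independent_simple] span_base
        representation_basis[OF independent_simple])
  also have "\<dots> = (if b \<in> \<Delta> then c b else 0)"
    by (simp add: finite_simple if_distrib cong: if_cong)
  finally show ?thesis .
qed

lemma sum_coord_scaleR: "v \<in> span \<Delta> \<Longrightarrow> (\<Sum>a\<in>\<Delta>. coord v a *\<^sub>R a) = v"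
  unfolding coord_def using sum_representation_eq[OF independent_simple _ finite_simple] by blast

lemma inner_eq_sum_coord: "v \<in> span \<Delta> \<Longrightarrow> v \<bullet> w = (\<Sum>a\<in>\<Delta>. coord v a * (a \<bullet> w))"
  by (subst sum_coord_scaleR[symmetric]) (simp_all add: inner_sum_left)

lemma coord_simple: "a \<in> \<Delta> \<Longrightarrow> coord a b = (if b = a then 1 else 0)"
  unfolding coord_def by (simp add: representation_basis[OF independent_simple])

lemma coord_add: "u \<in> span \<Delta> \<Longrightarrow> v \<in> span \<Delta> \<Longrightarrow> coord (u + v) b = coord u b + coord v b"
  unfolding coord_def by (simp add: representation_add[OF independent_simple])

lemma coord_diff: "u \<in> span \<Delta> \<Longrightarrow> v \<in> span \<Delta> \<Longrightarrow> coord (u - v) b = coord u b - coord v b"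
  unfolding coord_def by (simp add: representation_diff[OF independent_simple])

lemma coord_uminus: "v \<in> span \<Delta> \<Longrightarrow> coord (- v) b = - coord v b"
  unfolding coord_def by (simp add: representation_neg[OF independent_simple])

lemma support_uminus: "v \<in> span \<Delta> \<Longrightarrow> support (- v) = support v"
  by (simp add: support_def coord_uminus)

lemma coord_add_simple:
  "v \<in> span \<Delta> \<Longrightarrow> a \<in> \<Delta> \<Longrightarrow> coord (v + a) b = coord v b + (if b = a then 1 else 0)"
  by (simp add: coord_add span_base coord_simple)

lemma coord_diff_simple:
  "v \<in> span \<Delta> \<Longrightarrow> a \<in> \<Delta> \<Longrightarrow> coord (v - a) b = coord v b - (if b = a then 1 else 0)"
  by (simp add: coord_diff span_base coord_simple)

lemma height_add_simple: "v \<in> span \<Delta> \<Longrightarrow> a \<in> \<Delta> \<Longrightarrow> height (v + a) = height v + 1"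
  by (simp add: height_def coord_add_simple sum.distrib finite_simple)

lemma height_diff_simple: "v \<in> span \<Delta> \<Longrightarrow> a \<in> \<Delta> \<Longrightarrow> height (v - a) = height v - 1"
  by (simp add: height_def coord_diff_simple sum_subtractf finite_simple)

lemma support_simple: "a \<in> \<Delta> \<Longrightarrow> support a = {a}"
  by (auto simp: support_def coord_simple)

lemma root_coord_int:
  assumes "\<beta> \<in> \<Phi>" and "a \<in> \<Delta>" shows "coord \<beta> a \<in> \<int>"
proof -
  obtain c :: "'a \<Rightarrow> int" where "\<beta> = (\<Sum>\<alpha>\<in>\<Delta>. of_int (c \<alpha>) *\<^sub>R \<alpha>)"
    using simple_basis assms(1) unfolding simple_basis_def by blast
  then show ?thesis
    using assms(2) by (simp add: coord_sum_scaleR)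
qed

lemma root_coord_sign:
  assumes "\<beta> \<in> \<Phi>" shows "(\<forall>a\<in>\<Delta>. 0 \<le> coord \<beta> a) \<or> (\<forall>a\<in>\<Delta>. coord \<beta> a \<le> 0)"
proof -
  obtain c :: "'a \<Rightarrow> int" where "\<beta> = (\<Sum>\<alpha>\<in>\<Delta>. of_int (c \<alpha>) *\<^sub>R \<alpha>)"
      and "(\<forall>\<alpha>\<in>\<Delta>. c \<alpha> \<ge> 0) \<or> (\<forall>\<alpha>\<in>\<Delta>. c \<alpha> \<le> 0)"
    using simple_basis assms unfolding simple_basis_def by blast
  then show ?thesis
    by (simp add: coord_sum_scaleR)
qed

lemma root_coord_pos_imp_nonneg:
  "\<beta> \<in> \<Phi> \<Longrightarrow> b \<in> \<Delta> \<Longrightarrow> 0 < coord \<beta> b \<Longrightarrow> a \<in> \<Delta> \<Longrightarrow> 0 \<le> coord \<beta> a"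
  using root_coord_sign by fastforce

lemma nonneg_comb_iff:
  assumes "v \<in> span \<Delta>" and "\<forall>a\<in>\<Delta>. coord v a \<in> \<int>"
  shows "nonneg_comb \<Delta> v \<longleftrightarrow> (\<forall>a\<in>\<Delta>. 0 \<le> coord v a)"
proof
  assume "nonneg_comb \<Delta> v"
  then obtain c :: "'a \<Rightarrow> nat" where "v = (\<Sum>\<alpha>\<in>\<Delta>. of_nat (c \<alpha>) *\<^sub>R \<alpha>)"
    unfolding nonneg_comb_def by blast
  then show "\<forall>a\<in>\<Delta>. 0 \<le> coord v a"
    by (simp add: coord_sum_scaleR)
next
  assume nonneg: "\<forall>a\<in>\<Delta>. 0 \<le> coord v a"
  define c where "c a = nat \<lfloor>coord v a\<rfloor>" for a
  have "a \<in> \<Delta> \<Longrightarrow> of_nat (c a) = coord v a" for a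
    using nonneg assms(2) unfolding c_def by (auto elim!: Ints_cases)
  then have "v = (\<Sum>\<alpha>\<in>\<Delta>. of_nat (c \<alpha>) *\<^sub>R \<alpha>)"
    using sum_coord_scaleR[OF assms(1)] by (metis (no_types, lifting) sum.cong)
  then show "nonneg_comb \<Delta> v"
    unfolding nonneg_comb_def by blast
qed

lemma pos_roots_iff: "\<beta> \<in> pos_roots \<Phi> \<Delta> \<longleftrightarrow> \<beta> \<in> \<Phi> \<and> (\<forall>a\<in>\<Delta>. 0 \<le> coord \<beta> a)"
  unfolding pos_roots_def using nonneg_comb_iff root_in_span root_coord_int by auto

lemma root_le_iff:
  assumes "\<beta> \<in> \<Phi>" and "\<gamma> \<in> \<Phi>"
  shows "root_le \<Delta> \<beta> \<gamma> \<longleftrightarrow> (\<forall>a\<in>\<Delta>. coord \<beta> a \<le> coord \<gamma> a)"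
proof -
  have "\<gamma> - \<beta> \<in> span \<Delta>" and "\<forall>a\<in>\<Delta>. coord (\<gamma> - \<beta>) a \<in> \<int>"
    using assms root_in_span root_coord_int by (auto simp: span_diff coord_diff)
  then show ?thesis
    unfolding root_le_def using assms by (simp add: nonneg_comb_iff coord_diff root_in_span)
qed

lemma simple_inner_nonpos:
  assumes s: "s \<in> \<Delta>" and t: "t \<in> \<Delta>" and "s \<noteq> t" shows "s \<bullet> t \<le> 0"
proof (rule ccontr)
  assume "\<not> ?thesis"
  then have "s + - t \<in> \<Phi>"
    using assms simple_subset_roots uminus_root by (intro root_add_if_inner_neg) auto
  moreover have "coord (s - t) s = 1" "coord (s - t) t = -1"
    using assms by (simp_all add: coord_diff span_base coord_simple)
  ultimately show False
    using root_coord_sign[of "s - t"] s t by force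
qed

lemma separated_complement: "S \<subseteq> \<Delta> \<Longrightarrow> separated S \<Longrightarrow> separated (\<Delta> - S)"
  unfolding separated_def by (metis DiffD1 DiffD2 DiffI inner_commute subsetD)

lemma inner_eq_0_if_separated_supports:
  assumes "separated S" and "u \<in> span \<Delta>" "v \<in> span \<Delta>"
    and "support u \<subseteq> S" "support v \<subseteq> \<Delta> - S"
  shows "u \<bullet> v = 0"
proof -
  have "a \<bullet> v = 0" if "a \<in> S" for a
  proof -
    have "a \<bullet> v = (\<Sum>b\<in>\<Delta>. coord v b * (b \<bullet> a))"
      using inner_eq_sum_coord[OF assms(3)] by (simp add: inner_commute)
    also have "\<dots> = 0"
      using assms(1,5) that unfolding separated_def support_def
      by (intro sum.neutral ballI) (metis (mono_tags, lifting) inner_commute mem_Collect_eq mult_eq_0_iff subsetD)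
    finally show ?thesis .
  qed
  then show ?thesis
    using assms(4) by (auto simp: inner_eq_sum_coord[OF assms(2)] support_def intro!: sum.neutral)
qed

lemma root_diff_if_orthogonal_add:
  assumes "a \<in> \<Phi>" and "\<beta> + a \<in> \<Phi>" and "\<beta> \<bullet> a = 0"
  shows "\<beta> - a \<in> \<Phi>"
  using reflection_self[OF assms(1,2)] assms(3) by (simp add: inner_add_left scaleR_2)

text \<open>Induction on the height: subtracting a simple root \<open>a\<close> with \<open>\<beta> \<bullet> a > 0\<close> gives a
  smaller positive root \<open>\<beta> - a\<close>, supported on one side; if \<open>a\<close> lies on the other side,
  then \<open>\<beta> - a \<perp> a\<close> and reflecting \<open>\<beta>\<close> in \<open>a\<close> produces the root \<open>\<beta> - 2a\<close> of mixed sign.\<close>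

lemma pos_root_support_separated:
  assumes "S \<subseteq> \<Delta>" "separated S" "\<beta> \<in> pos_roots \<Phi> \<Delta>" "height \<beta> < real n"
  shows "support \<beta> \<subseteq> S \<or> support \<beta> \<subseteq> \<Delta> - S"
  using assms
proof (induction n arbitrary: S \<beta>)
  case 0
  then show ?case
    using sum_nonneg[of \<Delta> "coord \<beta>"] by (simp add: height_def pos_roots_iff)
next
  case (Suc n)
  have \<beta>: "\<beta> \<in> \<Phi>" and nonneg: "\<forall>x\<in>\<Delta>. 0 \<le> coord \<beta> x"
    using Suc.prems(3) by (auto simp: pos_roots_iff)
  have \<beta>_span: "\<beta> \<in> span \<Delta>"
    using root_in_span[OF \<beta>] .
  have "\<exists>a\<in>\<Delta>. 0 < a \<bullet> \<beta>"
  proof (rule ccontr)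
    assume "\<not> ?thesis"
    then have "(\<Sum>x\<in>\<Delta>. coord \<beta> x * (x \<bullet> \<beta>)) \<le> 0"
      using nonneg by (intro sum_nonpos) (simp add: mult_nonneg_nonpos not_less)
    then show False
      using root_inner_self_pos[OF \<beta>] inner_eq_sum_coord[OF \<beta>_span] by simp
  qed
  then obtain a where a: "a \<in> \<Delta>" and "0 < \<beta> \<bullet> a"
    by (auto simp: inner_commute)
  have a_root: "a \<in> \<Phi>"
    using a simple_subset_roots by blast
  have contra: False
    if T: "T \<subseteq> \<Delta>" "separated T" and aT: "a \<in> T" and t: "t \<in> \<Delta> - T"
      and t_pos: "0 < coord \<beta> t" for T t
  proof -
    have "\<beta> \<noteq> a"
      using t_pos aT t a by (auto simp: coord_simple split: if_splits)
    then have "\<beta> + - a \<in> \<Phi>"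
      using \<open>0 < \<beta> \<bullet> a\<close> \<beta> a_root uminus_root by (intro root_add_if_inner_neg) auto
    then have \<beta>': "\<beta> - a \<in> \<Phi>"
      by simp
    have t': "0 < coord (\<beta> - a) t"
      using t_pos aT t by (auto simp: coord_diff_simple[OF \<beta>_span a])
    have "\<beta> - a \<in> pos_roots \<Phi> \<Delta>"
      using \<beta>' root_coord_pos_imp_nonneg[OF \<beta>' _ t'] t by (simp add: pos_roots_iff)
    moreover have "height (\<beta> - a) < real n"
      using Suc.prems(4) by (simp add: height_diff_simple[OF \<beta>_span a])
    ultimately have "support (\<beta> - a) \<subseteq> T \<or> support (\<beta> - a) \<subseteq> \<Delta> - T"
      using Suc.IH T by blast
    then have support': "support (\<beta> - a) \<subseteq> \<Delta> - T"
      using t' t by (auto simp: support_def)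
    have "support a \<subseteq> T"
      using support_simple[OF a] aT by simp
    then have "(\<beta> - a) \<bullet> a = 0"
      using inner_eq_0_if_separated_supports[OF T(2) span_base[OF a] root_in_span[OF \<beta>'] _ support']
      by (simp add: inner_commute)
    then have "\<beta> - a - a \<in> \<Phi>"
      using root_diff_if_orthogonal_add[OF a_root] \<beta> by simp
    moreover have "coord (\<beta> - a) a = 0"
      using support' aT a by (auto simp: support_def)
    then have "coord (\<beta> - a - a) a = -1"
      using coord_diff_simple[OF root_in_span[OF \<beta>'] a] by simp
    moreover have "coord (\<beta> - a - a) t = coord (\<beta> - a) t"
      using aT t coord_diff_simple[OF root_in_span[OF \<beta>'] a] by auto
    ultimately show False
      using root_coord_pos_imp_nonneg[of "\<beta> - a - a" t a] t' t a by simp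
  qed
  show ?case
  proof (rule ccontr)
    assume "\<not> ?case"
    then obtain s t where "s \<in> support \<beta>" "s \<notin> \<Delta> - S" "t \<in> support \<beta>" "t \<notin> S"
      by blast
    then have s: "s \<in> S" "0 < coord \<beta> s" and t: "t \<in> \<Delta> - S" "0 < coord \<beta> t"
      using nonneg by (auto simp: support_def less_le)
    show False
    proof (cases "a \<in> S")
      case True
      show False
        by (rule contra[OF Suc.prems(1,2) True t])
    next
      case False
      then show False
        using contra[OF _ separated_complement[OF Suc.prems(1,2)], of s] a s Suc.prems(1) by auto
    qed
  qed
qed

lemma root_support_separated:
  assumes "S \<subseteq> \<Delta>" "separated S" "\<beta> \<in> \<Phi>"
  shows "support \<beta> \<subseteq> S \<or> support \<beta> \<subseteq> \<Delta> - S"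
proof -
  have pos: "support \<gamma> \<subseteq> S \<or> support \<gamma> \<subseteq> \<Delta> - S" if "\<gamma> \<in> pos_roots \<Phi> \<Delta>" for \<gamma>
  proof -
    obtain n :: nat where "height \<gamma> < real n"
      using reals_Archimedean2 by blast
    then show ?thesis
      using pos_root_support_separated assms(1,2) that by blast
  qed
  have "\<beta> \<in> pos_roots \<Phi> \<Delta> \<or> - \<beta> \<in> pos_roots \<Phi> \<Delta>"
    using root_coord_sign[OF assms(3)] assms(3) uminus_root
    by (auto simp: pos_roots_iff coord_uminus root_in_span)
  then show ?thesis
    using pos support_uminus[OF root_in_span[OF assms(3)]] by auto
qed

lemma separated_trivial_if_irreducible:
  assumes "irreducible_rs \<Phi>" and "S \<subseteq> \<Delta>" "separated S"
  shows "S = {} \<or> S = \<Delta>"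
proof (rule ccontr)
  assume "\<not> ?thesis"
  then obtain s t where s: "s \<in> S" and t: "t \<in> \<Delta> - S"
    using assms(2) by blast
  define A where "A = {\<beta> \<in> \<Phi>. support \<beta> \<subseteq> S}"
  have "s \<in> A" "t \<in> \<Phi> - A"
    using s t assms(2) simple_subset_roots support_simple by (auto simp: A_def)
  moreover have "a \<bullet> b = 0" if "a \<in> A" "b \<in> \<Phi> - A" for a b
    using that root_support_separated[OF assms(2,3), of b]
    by (intro inner_eq_0_if_separated_supports[OF assms(3)]) (auto simp: A_def root_in_span)
  ultimately show False
    using assms(1) unfolding irreducible_rs_def
    by (metis (no_types, lifting) A_def Diff_disjoint Diff_partition empty_iff mem_Collect_eq subsetI)
qed

lemma dominant_support_separated:
  assumes "\<beta> \<in> pos_roots \<Phi> \<Delta>" and dominant: "\<forall>a\<in>\<Delta>. 0 \<le> \<beta> \<bullet> a"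
  shows "separated (support \<beta>)"
  unfolding separated_def
proof (intro ballI)
  fix s t assume s: "s \<in> support \<beta>" and t: "t \<in> \<Delta> - support \<beta>"
  have \<beta>: "\<beta> \<in> \<Phi>" and nonneg: "\<forall>x\<in>\<Delta>. 0 \<le> coord \<beta> x"
    using assms(1) by (auto simp: pos_roots_iff)
  have term_nonneg: "0 \<le> - (coord \<beta> x * (x \<bullet> t))" if "x \<in> \<Delta>" for x
  proof (cases "x = t")
    case True
    then show ?thesis using t by (simp add: support_def)
  next
    case False
    then show ?thesis
      using simple_inner_nonpos[OF that _ False] t nonneg that by (simp add: mult_nonneg_nonpos)
  qed
  have "0 \<le> \<beta> \<bullet> t"
    using dominant t by blast
  then have "(\<Sum>x\<in>\<Delta>. - (coord \<beta> x * (x \<bullet> t))) = 0"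
    using sum_nonneg[of \<Delta> "\<lambda>x. - (coord \<beta> x * (x \<bullet> t))"] term_nonneg
    by (simp add: inner_eq_sum_coord[OF root_in_span[OF \<beta>]] sum_negf)
  then have "coord \<beta> s * (s \<bullet> t) = 0"
    using sum_nonneg_eq_0_iff[OF finite_simple, of "\<lambda>x. - (coord \<beta> x * (x \<bullet> t))"]
      term_nonneg s by (auto simp: support_def)
  then show "s \<bullet> t = 0"
    using s by (simp add: support_def)
qed

lemma root_support_nonempty: "\<beta> \<in> \<Phi> \<Longrightarrow> support \<beta> \<noteq> {}"
  using zero_not_root sum_coord_scaleR[of \<beta>] root_in_span by (force simp: support_def)

lemma simple_pos_root: "a \<in> \<Delta> \<Longrightarrow> a \<in> pos_roots \<Phi> \<Delta>"
  using simple_subset_roots by (auto simp: pos_roots_iff coord_simple)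

lemma coord_eq_0_if_not_above_simple:
  assumes a: "a \<in> \<Delta>" and \<gamma>: "\<gamma> \<in> pos_roots \<Phi> \<Delta>" and "\<not> root_le \<Delta> a \<gamma>"
  shows "coord \<gamma> a = 0"
proof -
  have \<gamma>_root: "\<gamma> \<in> \<Phi>" and nonneg: "\<forall>b\<in>\<Delta>. 0 \<le> coord \<gamma> b"
    using \<gamma> by (auto simp: pos_roots_iff)
  have "a \<in> \<Phi>"
    using a simple_subset_roots by blast
  then have "\<not> 1 \<le> coord \<gamma> a"
    using assms(3) nonneg a by (auto simp: root_le_iff[OF _ \<gamma>_root] coord_simple split: if_splits)
  moreover have "coord \<gamma> a \<in> \<int>" "0 \<le> coord \<gamma> a"
    using root_coord_int[OF \<gamma>_root a] nonneg a by auto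
  ultimately show ?thesis
    by (auto elim!: Ints_cases)
qed

lemma abelian_ideal_highest_dominant:
  assumes J: "abelian_ideal \<Phi> \<Delta> J" and \<alpha>: "\<alpha> \<in> \<Delta>" "\<alpha> \<in> J"
    and \<delta>: "\<delta> \<in> J" "coord \<delta> \<alpha> = 0"
    and highest: "\<And>\<rho>. \<rho> \<in> J \<Longrightarrow> coord \<rho> \<alpha> = 0 \<Longrightarrow> height \<rho> \<le> height \<delta>"
    and a: "a \<in> \<Delta>"
  shows "0 \<le> \<delta> \<bullet> a"
proof (rule ccontr)
  assume "\<not> ?thesis"
  have \<delta>_pos: "\<delta> \<in> pos_roots \<Phi> \<Delta>"
    using J \<delta> by (auto simp: abelian_ideal_def)
  then have \<delta>_root: "\<delta> \<in> \<Phi>" and nonneg: "\<forall>b\<in>\<Delta>. 0 \<le> coord \<delta> b"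
    by (auto simp: pos_roots_iff)
  have \<delta>_span: "\<delta> \<in> span \<Delta>"
    using root_in_span[OF \<delta>_root] .
  have "\<delta> \<noteq> - a"
    using nonneg a coord_uminus[OF span_base[OF a], of a] by (force simp: coord_simple)
  then have sum_root: "\<delta> + a \<in> \<Phi>"
    using \<open>\<not> 0 \<le> \<delta> \<bullet> a\<close> \<delta>_root a simple_subset_roots by (intro root_add_if_inner_neg) auto
  show False
  proof (cases "a = \<alpha>")
    case True
    then show False
      using J \<alpha>(2) \<delta>(1) sum_root by (auto simp: abelian_ideal_def)
  next
    case False
    have "\<delta> + a \<in> pos_roots \<Phi> \<Delta>"
      using sum_root nonneg by (simp add: pos_roots_iff coord_add_simple[OF \<delta>_span a])
    moreover have "root_le \<Delta> \<delta> (\<delta> + a)"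
      by (simp add: root_le_iff[OF \<delta>_root sum_root] coord_add_simple[OF \<delta>_span a])
    ultimately have "\<delta> + a \<in> J"
      using J \<delta>(1) by (auto simp: abelian_ideal_def)
    moreover have "coord (\<delta> + a) \<alpha> = 0"
      using \<delta>(2) False by (simp add: coord_add_simple[OF \<delta>_span a])
    ultimately have "height (\<delta> + a) \<le> height \<delta>"
      by (rule highest)
    then show False
      by (simp add: height_add_simple[OF \<delta>_span a])
  qed
qed

lemma abelian_ideal_subset_simple_upset:
  assumes "irreducible_rs \<Phi>" and \<alpha>: "\<alpha> \<in> \<Delta>" and J: "abelian_ideal \<Phi> \<Delta> J"
    and upset_sub: "{\<beta> \<in> pos_roots \<Phi> \<Delta>. root_le \<Delta> \<alpha> \<beta>} \<subseteq> J"
  shows "J \<subseteq> {\<beta> \<in> pos_roots \<Phi> \<Delta>. root_le \<Delta> \<alpha> \<beta>}"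
proof
  fix \<gamma> assume \<gamma>: "\<gamma> \<in> J"
  have J_pos: "J \<subseteq> pos_roots \<Phi> \<Delta>"
    using J by (simp add: abelian_ideal_def)
  have \<alpha>_root: "\<alpha> \<in> \<Phi>"
    using \<alpha> simple_subset_roots by blast
  have "\<alpha> \<in> J"
    using upset_sub simple_pos_root[OF \<alpha>] by (auto simp: root_le_iff[OF \<alpha>_root \<alpha>_root])
  show "\<gamma> \<in> {\<beta> \<in> pos_roots \<Phi> \<Delta>. root_le \<Delta> \<alpha> \<beta>}"
  proof (rule ccontr)
    assume "\<gamma> \<notin> {\<beta> \<in> pos_roots \<Phi> \<Delta>. root_le \<Delta> \<alpha> \<beta>}"
    then have "coord \<gamma> \<alpha> = 0"
      using coord_eq_0_if_not_above_simple[OF \<alpha>] \<gamma> J_pos by blast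
    define U where "U = {\<rho> \<in> J. coord \<rho> \<alpha> = 0}"
    have "finite U" "U \<noteq> {}"
      using \<gamma> \<open>coord \<gamma> \<alpha> = 0\<close> J_pos finite_roots
      by (auto simp: U_def pos_roots_def intro: finite_subset)
    then obtain \<delta> where "\<delta> \<in> U" and "Max (height ` U) = height \<delta>"
      by (rule obtains_MAX)
    then have \<delta>: "\<delta> \<in> J" "coord \<delta> \<alpha> = 0" and highest: "\<And>\<rho>. \<rho> \<in> U \<Longrightarrow> height \<rho> \<le> height \<delta>"
      using \<open>finite U\<close> Max_ge[of "height ` U"] by (auto simp: U_def)
    have \<delta>_pos: "\<delta> \<in> pos_roots \<Phi> \<Delta>"
      using J_pos \<delta> by blast
    have "separated (support \<delta>)"
      using abelian_ideal_highest_dominant[OF J \<alpha> \<open>\<alpha> \<in> J\<close> \<delta>] highest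
      by (intro dominant_support_separated[OF \<delta>_pos]) (auto simp: U_def)
    moreover have "support \<delta> \<noteq> {}"
      using \<delta>_pos by (simp add: pos_roots_iff root_support_nonempty)
    moreover have "\<alpha> \<notin> support \<delta>"
      using \<delta>(2) by (simp add: support_def)
    ultimately show False
      using separated_trivial_if_irreducible[OF assms(1)] \<alpha> by (metis support_def mem_Collect_eq subsetI)
  qed
qed

end

theorem lemma5p2:
  fixes \<Phi> \<Delta> :: "'a::euclidean_space set" and \<alpha> :: 'a
  assumes "root_system \<Phi>" and "irreducible_rs \<Phi>" and "simple_basis \<Phi> \<Delta>"
    and "\<alpha> \<in> \<Delta>"
    and "abelian_ideal \<Phi> \<Delta> {\<beta> \<in> pos_roots \<Phi> \<Delta>. root_le \<Delta> \<alpha> \<beta>}"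
  shows "maximal_abelian_ideal \<Phi> \<Delta> {\<beta> \<in> pos_roots \<Phi> \<Delta>. root_le \<Delta> \<alpha> \<beta>}"
proof -
  interpret based_root_system \<Phi> \<Delta>
    using assms(1,3) by unfold_locales
  show ?thesis
    unfolding maximal_abelian_ideal_def
    using assms(5) abelian_ideal_subset_simple_upset[OF assms(2,4)] by blast
qed

end
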